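(* Let $r\geqslant 2$, $\ell\geqslant 1$ and $m=2^r(2^\ell+1)$. Then $\gcd(r,\ell)\leqslant 2$ if and only if, for every pair of distinct roots $\tau_i,\tau_j\in\overline{\mathbb F}_2$ of $(L_1(x^{m-1}))'$, one has $P_\ell(\tau_i+\tau_j)\neq 0$.
   Context: For $k\geqslant 1$, $P_k(x)=x+x^2+\dots+x^{2^{k-1}}$ is the $k$-th trace polynomial. For $m\equiv 0\pmod 4$, $L_1(x^{m-1})$ denotes the unique polynomial $Q$ of degree at most $(m-2)/2$ over $\mathbb F_2$ with $Q(x(x+1))=(x+1)^{m-1}+x^{m-1}$. *)

theory Defs
  imports "HOL-Algebra.Algebraic_Closure_Type" "HOL-Library.Z2"
begin

text \<open>The field F_2 is the type bit; its algebraic closure is bit alg_closure.\<close>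

definition trace_poly :: "nat \<Rightarrow> bit poly" where
  "trace_poly k = (\<Sum>i<k. monom 1 (2 ^ i))"

text \<open>L_1(x^(m-1)): the unique Q of degree at most (m-2)/2 with
  Q(x(x+1)) = (x+1)^(m-1) + x^(m-1).\<close>
definition L1 :: "nat \<Rightarrow> bit poly" where
  "L1 m = (THE Q. degree Q \<le> (m - 2) div 2 \<and>
      pcompose Q [:0, 1, 1:] = [:1, 1:] ^ (m - 1) + [:0, 1:] ^ (m - 1))"

end

theory Submission
  imports Defs "HOL-Computational_Algebra.Primes"
begin

text \<open>
  Write a root of L1(x^(m-1))' as t = x^2 + x. With z = x^(2^(r-1)) and u = z^(2^l), the root
  condition (x+1)^(m-2) = x^(m-2) becomes x z + x u + x + z u = 0 for x not in {0, 1}, and for a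
  second root t' = y^2 + y one has P_l(t + t') = w^(2^l) + w with w = x + y. If w^(2^l) = w but
  t \<noteq> t', adding the two equations shows that z + u, and then x and w, are fixed by both
  Frobenius powers 2^r and 2^l, so they lie in the field with 2^gcd(r,l) elements. When
  gcd(r,l) \<le> 2 that field is F_4, where every admissible x satisfies x^2 + x + 1 = 0, forcing
  t = t'. When gcd(r,l) \<ge> 3, an element a of that field outside F_4 gives the distinct roots
  a^2 + a and a^4 + a^2, whose sum a^4 + a is a zero of P_l.
\<close>

section \<open>Frobenius in characteristic two\<close>

lemma CHAR_bit [simp]: "CHAR(bit) = 2"
proof (rule CHAR_eqI)
  show "of_nat 2 = (0 :: bit)"
    by simp
next
  show "2 dvd n" if "of_nat n = (0 :: bit)" for n
    using that by (induction n) auto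
qed

lemma two_eq_0_CHAR_2: "CHAR('a::semiring_1) = 2 \<Longrightarrow> (2::'a) = 0"
  by (metis of_nat_CHAR of_nat_numeral)

lemma add_self_CHAR_2: "CHAR('a::semiring_1) = 2 \<Longrightarrow> (x::'a) + x = 0"
  by (metis mult_2 mult_zero_left two_eq_0_CHAR_2)

lemma add_eq_0_iff_CHAR_2: "CHAR('a::ring_1) = 2 \<Longrightarrow> (x::'a) + y = 0 \<longleftrightarrow> x = y"
  by (metis add_eq_0_iff uminus_CHAR_2)

lemma power_two_power_add_CHAR_2:
  "CHAR('a::comm_semiring_1) = 2 \<Longrightarrow> ((x::'a) + y) ^ 2 ^ k = x ^ 2 ^ k + y ^ 2 ^ k"
  by (rule freshmans_dream') simp_all

lemma power_two_power_sum_CHAR_2: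
  "CHAR('a::comm_semiring_1) = 2 \<Longrightarrow> (\<Sum>i\<in>A. f i) ^ 2 ^ k = (\<Sum>i\<in>A. (f i :: 'a) ^ 2 ^ k)"
  by (rule freshmans_dream_sum') simp_all

lemma power_two_power_eq_add_trace:
  fixes x :: "'a::comm_ring_1"
  assumes "CHAR('a) = 2"
  shows "x ^ 2 ^ k = x + (\<Sum>i<k. (x\<^sup>2 + x) ^ 2 ^ i)"
proof (induction k)
  case (Suc k)
  have "x ^ 2 ^ Suc k = (x ^ 2 ^ k)\<^sup>2"
    by (simp add: power_mult[symmetric] mult.commute)
  also have "\<dots> = x\<^sup>2 + (\<Sum>i<k. ((x\<^sup>2 + x) ^ 2 ^ i)\<^sup>2)"
    using power_two_power_add_CHAR_2[OF assms, of _ _ 1] power_two_power_sum_CHAR_2[OF assms, of _ _ 1]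
    by (simp add: Suc)
  also have "\<dots> = x\<^sup>2 + (\<Sum>i<k. (x\<^sup>2 + x) ^ 2 ^ Suc i)"
    by (simp add: power_mult[symmetric] mult.commute)
  also have "\<dots> = x + (\<Sum>i<Suc k. (x\<^sup>2 + x) ^ 2 ^ i)"
    by (simp add: sum.lessThan_Suc_shift algebra_simps two_eq_0_CHAR_2[OF assms] del: sum.lessThan_Suc)
  finally show ?case .
qed simp

lemma trace_square_add_self:
  fixes x :: "'a::comm_ring_1"
  assumes "CHAR('a) = 2"
  shows "(\<Sum>i<k. (x\<^sup>2 + x) ^ 2 ^ i) = x ^ 2 ^ k + x"
proof -
  have "x ^ 2 ^ k + x = (\<Sum>i<k. (x\<^sup>2 + x) ^ 2 ^ i) + (x + x)"
    by (subst power_two_power_eq_add_trace[OF assms]) (simp add: add_ac)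
  then show ?thesis
    by (simp add: add_self_CHAR_2[OF assms])
qed

lemma square_add_self_eq_iff_CHAR_2:
  fixes x y :: "'a::comm_ring_1"
  assumes "CHAR('a) = 2"
  shows "x\<^sup>2 + x = y\<^sup>2 + y \<longleftrightarrow> (x + y)\<^sup>2 + (x + y) = 0"
proof -
  have "(x + y)\<^sup>2 + (x + y) = (x\<^sup>2 + x) + (y\<^sup>2 + y) + 2 * (x * y)"
    by (simp add: algebra_simps power2_eq_square)
  then have "(x + y)\<^sup>2 + (x + y) = (x\<^sup>2 + x) + (y\<^sup>2 + y)"
    by (simp add: two_eq_0_CHAR_2[OF assms])
  then show ?thesis
    using add_eq_0_iff_CHAR_2[OF assms] by metis
qed

lemma power_power_mult_eq_self:
  fixes a :: "'a::monoid_mult"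
  assumes "a ^ p ^ i = a"
  shows "a ^ p ^ (i * n) = a"
proof (induction n)
  case (Suc n)
  then show ?case
    using assms by (simp add: power_add power_mult)
qed simp

lemma power_power_gcd_eq_self:
  fixes a :: "'a::monoid_mult"
  assumes i: "a ^ p ^ i = a" and j: "a ^ p ^ j = a"
  shows "a ^ p ^ gcd i j = a"
proof (cases "i = 0")
  case False
  then obtain u v where "i * u = j * v + gcd i j"
    using bezout_nat by blast
  then have "a = (a ^ p ^ (j * v)) ^ p ^ gcd i j"
    using power_power_mult_eq_self[OF i, of u] by (simp add: power_add power_mult)
  then show ?thesis
    using power_power_mult_eq_self[OF j, of v] by simp
qed (simp add: j)

lemma quadratic_eq_0_if_power_4_eq_self:
  fixes x :: "'a::field"
  assumes char: "CHAR('a) = 2" and "x ^ 4 = x" and "x \<noteq> 0" and "x \<noteq> 1"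
  shows "x\<^sup>2 + x + 1 = 0"
proof -
  have "x * (x + 1) * (x\<^sup>2 + x + 1) = x ^ 4 + x + 2 * (x ^ 3 + x\<^sup>2)"
    by (simp add: algebra_simps power2_eq_square power3_eq_cube power4_eq_xxxx)
  also have "\<dots> = 0"
    using assms by (simp add: two_eq_0_CHAR_2 add_self_CHAR_2)
  finally show ?thesis
    using assms add_eq_0_iff_CHAR_2[OF char, of x 1] by simp
qed

section \<open>Algebraically closed fields of characteristic two\<close>

lemma card_roots_eq_degree_if_separable:
  fixes p :: "'a::alg_closed_field poly"
  assumes "p \<noteq> 0" and separable: "\<And>a. poly p a = 0 \<Longrightarrow> poly (pderiv p) a \<noteq> 0"
  shows "card {a. poly p a = 0} = degree p"
proof -
  obtain A where size: "size A = degree p" and p: "p = smult (lead_coeff p) (\<Prod>x\<in>#A. [:-x, 1:])"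
    using alg_closed_imp_factorization[OF assms(1)] by blast
  have roots: "{a. poly p a = 0} = set_mset A"
    using assms(1) by (subst p) (auto simp: poly_prod_mset prod_mset_zero_iff)
  have simple: "count A a \<le> 1" for a
  proof (rule ccontr)
    assume "\<not> count A a \<le> 1"
    moreover define B where "B = A - {#a, a#}"
    ultimately have "A = add_mset a (add_mset a B)"
      by (intro multiset_eqI) auto
    then have "p = [:-a, 1:] * ([:-a, 1:] * smult (lead_coeff p) (\<Prod>x\<in>#B. [:-x, 1:]))"
      using p by (simp add: mult_smult_right)
    then obtain q where q: "p = [:-a, 1:] * ([:-a, 1:] * q)" ..
    have "poly [:-a, 1:] a = 0"
      by simp
    then have "poly p a = 0" and "poly (pderiv p) a = 0"
      unfolding q pderiv_mult poly_add poly_mult by simp_all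
    with separable show False
      by blast
  qed
  have "A = mset_set (set_mset A)"
  proof (rule multiset_eqI)
    show "count A x = count (mset_set (set_mset A)) x" for x
      using simple[of x] by (cases "x \<in># A") (auto simp: count_mset_set le_Suc_eq count_eq_zero_iff)
  qed
  then show ?thesis
    using roots size by (metis size_mset_set)
qed

lemma card_power_two_power_fixed:
  fixes g :: nat
  assumes char: "CHAR('a::alg_closed_field) = 2" and "g \<ge> 1"
  shows "card {a::'a. a ^ 2 ^ g = a} = 2 ^ g"
proof -
  define p :: "'a poly" where "p = monom 1 (2 ^ g) + [:0, 1:]"
  have "{a. a ^ 2 ^ g = a} = {a. poly p a = 0}"
    by (simp add: p_def poly_monom add_eq_0_iff_CHAR_2[OF char])
  moreover have "(1::nat) < 2 ^ g"
    using assms(2) by (intro one_less_power) simp_all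
  then have "degree p = 2 ^ g"
    unfolding p_def by (subst degree_add_eq_left) (simp_all add: degree_monom_eq)
  moreover have "pderiv p = 1"
    using assms(2) char of_nat_eq_0_iff_char_dvd[where 'a='a, of "2 ^ g"]
    by (simp add: p_def pderiv_add pderiv_monom pderiv_pCons power_0_left one_pCons)
  ultimately show ?thesis
    using card_roots_eq_degree_if_separable[of p] by force
qed

lemma exists_fixed_outside_F4:
  assumes "CHAR('a) = 2" and "g \<ge> 3"
  obtains a :: "'a::alg_closed_field" where "a ^ 2 ^ g = a" and "a ^ 4 \<noteq> a"
proof -
  have "card {a::'a. a ^ 4 = a} = 4"
    using card_power_two_power_fixed[OF assms(1), of 2] by simp
  moreover have "card {a::'a. a ^ 2 ^ g = a} = 2 ^ g"
    using card_power_two_power_fixed[OF assms(1)] assms(2) by simp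
  moreover have "(4::nat) < 2 ^ g"
    using power_strict_increasing[of 2 g "2::nat"] assms(2) by simp
  ultimately have "\<not> {a::'a. a ^ 2 ^ g = a} \<subseteq> {a::'a. a ^ 4 = a}"
    by (metis card_mono card.infinite not_le zero_neq_numeral)
  then show ?thesis
    using that by blast
qed

lemma surj_square_add_self: "surj (\<lambda>x::'a::alg_closed_field. x\<^sup>2 + x)"
  unfolding surj_def
proof
  fix t :: 'a
  obtain x where "poly [:-t, 1, 1:] x = 0"
    using alg_closed_imp_poly_has_root[of "[:-t, 1, 1:]"] by auto
  then show "\<exists>x. t = x\<^sup>2 + x"
    by (auto simp: algebra_simps power2_eq_square)
qed

section \<open>The polynomial L1(x^(m-1))\<close>

text \<open>
  The factor y = x (x+1) is kept because the Frobenius computation naturally yields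
  x (x+1)^m + (x+1) x^m; it is cancelled later in the domain bit poly.
\<close>

lemma quadratic_mult_L1_identity:
  fixes x :: "'a::comm_ring_1"
  assumes char: "CHAR('a) = 2" and m: "m = 2 ^ r * (2 ^ l + 1)"
  defines "y \<equiv> x\<^sup>2 + x"
  shows "y * ((x + 1) ^ (m - 1) + x ^ (m - 1))
       = y * (1 + (\<Sum>i<r. y ^ (2 ^ i - 1)) * (\<Sum>i<r + l. y ^ 2 ^ i))"
proof -
  define P where "P k = (\<Sum>i<k. y ^ 2 ^ i)" for k
  have y_mult: "y * (\<Sum>i<r. y ^ (2 ^ i - 1)) = P r"
    unfolding P_def sum_distrib_left by (intro sum.cong refl) (simp flip: power_Suc)
  have x_pow: "x ^ 2 ^ k = x + P k" for k
    unfolding P_def y_def by (rule power_two_power_eq_add_trace[OF char])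
  have x1_pow: "(x + 1) ^ 2 ^ k = (x + 1) + P k" for k
  proof -
    have "(x + 1)\<^sup>2 + (x + 1) = y"
      by (simp add: y_def power2_eq_square algebra_simps two_eq_0_CHAR_2[OF char])
    then show ?thesis
      using power_two_power_eq_add_trace[OF char, of "x + 1" k] by (simp add: P_def)
  qed
  have m_sum: "m = 2 ^ r + 2 ^ (r + l)" and m_pos: "m = Suc (m - 1)"
    using m by (simp_all add: algebra_simps power_add)
  have "y * ((x + 1) ^ (m - 1) + x ^ (m - 1)) = x * (x + 1) ^ m + (x + 1) * x ^ m"
    by (subst (3 4) m_pos) (simp add: y_def power2_eq_square algebra_simps)
  also have "\<dots> = x * ((x + 1) + P r) * ((x + 1) + P (r + l)) + (x + 1) * (x + P r) * (x + P (r + l))"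
    by (simp only: m_sum power_add[of _ "2 ^ r"] x_pow x1_pow mult.assoc)
  also have "\<dots> = y + P r * P (r + l)"
    by (simp add: y_def power2_eq_square algebra_simps two_eq_0_CHAR_2[OF char] flip: mult_2)
  also have "\<dots> = y * (1 + (\<Sum>i<r. y ^ (2 ^ i - 1)) * P (r + l))"
    by (simp only: distrib_left mult_1_right y_mult flip: mult.assoc)
  finally show ?thesis
    by (simp add: P_def)
qed

lemma pcompose_monom_1: "pcompose (monom 1 n) q = q ^ n"
  by (induction n) (simp_all add: monom_Suc pcompose_pCons pcompose_1)

definition L1_explicit :: "nat \<Rightarrow> nat \<Rightarrow> bit poly" where
  "L1_explicit r l = 1 + (\<Sum>i<r. monom 1 (2 ^ i - 1)) * trace_poly (r + l)"

lemma pcompose_L1_explicit: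
  assumes "m = 2 ^ r * (2 ^ l + 1)"
  shows "pcompose (L1_explicit r l) [:0, 1, 1:] = [:1, 1:] ^ (m - 1) + [:0, 1:] ^ (m - 1)"
proof -
  define Y :: "bit poly" where "Y = [:0, 1:]\<^sup>2 + [:0, 1:]"
  have Y: "[:0, 1, 1:] = Y" and "Y \<noteq> 0"
    by (simp_all add: Y_def power2_eq_square)
  have "pcompose (L1_explicit r l) Y
      = 1 + (\<Sum>i<r. Y ^ (2 ^ i - 1)) * (\<Sum>i<r + l. Y ^ 2 ^ i)"
    by (simp add: L1_explicit_def trace_poly_def pcompose_add pcompose_mult pcompose_sum pcompose_1
        pcompose_monom_1)
  moreover have "Y * (1 + (\<Sum>i<r. Y ^ (2 ^ i - 1)) * (\<Sum>i<r + l. Y ^ 2 ^ i))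
      = Y * ([:1, 1:] ^ (m - 1) + [:0, 1:] ^ (m - 1))"
    using quadratic_mult_L1_identity[OF _ assms, of "[:0, 1::bit:]"]
    by (simp add: Y_def one_pCons) metis
  ultimately show ?thesis
    using \<open>Y \<noteq> 0\<close> by (simp add: Y)
qed

lemma degree_sum_monom_le:
  assumes "finite A" and "\<And>i. i \<in> A \<Longrightarrow> f i \<le> n"
  shows "degree (\<Sum>i\<in>A. monom c (f i)) \<le> n"
  using assms by (intro degree_sum_le) (auto intro: order.trans[OF degree_monom_le])

lemma degree_L1_explicit:
  assumes "r \<ge> 1" and "m = 2 ^ r * (2 ^ l + 1)"
  shows "degree (L1_explicit r l) \<le> (m - 2) div 2"
proof -
  have "degree (\<Sum>i<r. monom (1::bit) (2 ^ i - 1)) \<le> 2 ^ (r - 1) - 1"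
    by (rule degree_sum_monom_le) (auto intro!: diff_le_mono power_increasing)
  moreover have "degree (trace_poly (r + l)) \<le> 2 ^ (r + l - 1)"
    unfolding trace_poly_def by (rule degree_sum_monom_le) (auto intro!: power_increasing)
  moreover have "(m - 2) div 2 = 2 ^ (r - 1) - 1 + 2 ^ (r + l - 1)"
    using assms by (cases r) (simp_all add: algebra_simps power_add)
  ultimately have "degree ((\<Sum>i<r. monom (1::bit) (2 ^ i - 1)) * trace_poly (r + l)) \<le> (m - 2) div 2"
    using degree_mult_le[of "\<Sum>i<r. monom (1::bit) (2 ^ i - 1)" "trace_poly (r + l)"] by linarith
  then show ?thesis
    unfolding L1_explicit_def by (intro degree_add_le) simp_all
qed

lemma L1_eq_L1_explicit:
  assumes "r \<ge> 1" and "m = 2 ^ r * (2 ^ l + 1)"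
  shows "L1 m = L1_explicit r l"
  unfolding L1_def
proof (rule the_equality)
  show "degree (L1_explicit r l) \<le> (m - 2) div 2 \<and>
      pcompose (L1_explicit r l) [:0, 1, 1:] = [:1, 1:] ^ (m - 1) + [:0, 1:] ^ (m - 1)"
    using degree_L1_explicit[OF assms] pcompose_L1_explicit[OF assms(2)] ..
next
  fix Q :: "bit poly"
  assume "degree Q \<le> (m - 2) div 2 \<and> pcompose Q [:0, 1, 1:] = [:1, 1:] ^ (m - 1) + [:0, 1:] ^ (m - 1)"
  then have "pcompose (Q - L1_explicit r l) [:0, 1, 1:] = 0"
    using pcompose_L1_explicit[OF assms(2)] by (simp add: pcompose_diff)
  then show "Q = L1_explicit r l"
    by (simp add: pcompose_eq_0_iff)
qed

lemma pcompose_L1: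
  assumes "r \<ge> 1" and "m = 2 ^ r * (2 ^ l + 1)"
  shows "pcompose (L1 m) [:0, 1, 1:] = [:1, 1:] ^ (m - 1) + [:0, 1:] ^ (m - 1)"
  unfolding L1_eq_L1_explicit[OF assms] by (rule pcompose_L1_explicit[OF assms(2)])

lemma pcompose_pderiv_L1:
  assumes "r \<ge> 1" and m: "m = 2 ^ r * (2 ^ l + 1)"
  shows "pcompose (pderiv (L1 m)) [:0, 1, 1:] = [:1, 1:] ^ (m - 2) + [:0, 1:] ^ (m - 2)"
proof -
  obtain n where "m = 2 * n" and "n \<ge> 1"
  proof
    show "m = 2 * (2 ^ (r - 1) * (2 ^ l + 1))"
      using assms by (cases r) simp_all
  qed (simp add: Suc_le_eq)
  then have "m - 1 = Suc (2 * (n - 1))" and m2: "m - 2 = m - 1 - 1"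
    by simp_all
  then have "(of_nat (m - 1) :: bit) = 1"
    by simp
  then have "pderiv ([:1, 1:] ^ (m - 1) + [:0, 1:] ^ (m - 1)) = [:1, 1:] ^ (m - 2) + [:0, 1::bit:] ^ (m - 2)"
    unfolding m2 by (simp add: pderiv_add pderiv_power pderiv_pCons)
  moreover have "pderiv (pcompose (L1 m) [:0, 1, 1:]) = pcompose (pderiv (L1 m)) [:0, 1, 1:]"
    by (simp add: pderiv_pcompose pderiv_pCons one_pCons)
  ultimately show ?thesis
    by (simp only: pcompose_L1[OF assms])
qed

lemma map_poly_to_ac_add: "map_poly to_ac (p + q) = map_poly to_ac p + map_poly to_ac q"
  by (intro poly_eqI) (simp add: coeff_map_poly)

lemma map_poly_to_ac_mult: "map_poly to_ac (p * q) = map_poly to_ac p * map_poly to_ac q"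
  by (intro poly_eqI) (simp add: coeff_map_poly coeff_mult to_ac_sum)

lemma map_poly_to_ac_power: "map_poly to_ac (p ^ n) = map_poly to_ac p ^ n"
  by (induction n) (simp_all add: map_poly_to_ac_mult)

lemma map_poly_to_ac_pcompose:
  "map_poly to_ac (pcompose p q) = pcompose (map_poly to_ac p) (map_poly to_ac q)"
  by (induction p) (simp_all add: pcompose_pCons map_poly_pCons map_poly_to_ac_add map_poly_to_ac_mult)

lemma poly_trace_poly: "poly (map_poly to_ac (trace_poly l)) t = (\<Sum>i<l. t ^ 2 ^ i)"
  by (induction l) (simp_all add: trace_poly_def map_poly_to_ac_add map_poly_monom poly_monom)

lemma poly_trace_poly_add_quadratics:
  "poly (map_poly to_ac (trace_poly l)) ((x\<^sup>2 + x) + (y\<^sup>2 + y)) = (x + y) ^ 2 ^ l + (x + y)"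
  for x y :: "bit alg_closure"
proof -
  have "(x\<^sup>2 + x) + (y\<^sup>2 + y) = (x + y)\<^sup>2 + (x + y)"
    by (simp add: algebra_simps power2_eq_square two_eq_0_CHAR_2 flip: mult_2)
  then show ?thesis
    unfolding poly_trace_poly by (simp only: trace_square_add_self CHAR_alg_closure CHAR_bit)
qed

lemma poly_pderiv_L1_quadratic:
  assumes "r \<ge> 1" and "m = 2 ^ r * (2 ^ l + 1)"
  shows "poly (map_poly to_ac (pderiv (L1 m))) (x\<^sup>2 + x) = (x + 1) ^ (m - 2) + x ^ (m - 2)"
  using arg_cong[OF pcompose_pderiv_L1[OF assms], of "\<lambda>p. poly (map_poly to_ac p) x"]
  by (simp add: map_poly_to_ac_pcompose poly_pcompose map_poly_to_ac_add map_poly_to_ac_power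
      map_poly_pCons power2_eq_square algebra_simps)

section \<open>Roots of the derivative\<close>

text \<open>
  With z = x^(2^s) and u = x^(2^(s+l)) = z^(2^l), the equation is x (z+1) (u+1) = (x+1) z u,
  i.e. x (x+1)^N = (x+1) x^N for N = 2^s + 2^(s+l), which is (x+1)^(2N-2) = x^(2N-2) after
  cancelling x (x+1) and taking square roots.
\<close>

definition lifted_root :: "nat \<Rightarrow> nat \<Rightarrow> 'a::field \<Rightarrow> bool" where
  "lifted_root s l x \<longleftrightarrow> x \<noteq> 0 \<and> x \<noteq> 1 \<and>
     x * x ^ 2 ^ s + x * x ^ 2 ^ (s + l) + x + x ^ 2 ^ s * x ^ 2 ^ (s + l) = 0"

lemma lifted_root_iff:
  fixes x :: "'a::field"
  assumes char: "CHAR('a) = 2" and N: "N = 2 ^ s + 2 ^ (s + l)"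
  shows "(x + 1) ^ (2 * N - 2) + x ^ (2 * N - 2) = 0 \<longleftrightarrow> lifted_root s l x"
proof -
  have two: "(2::'a) = 0"
    using char by (rule two_eq_0_CHAR_2)
  have "N \<ge> 2"
    using N by (metis add_mono one_le_numeral one_le_power one_add_one)
  then have N_pos: "N = Suc (N - 1)" and exp: "2 * N - 2 = 2 * (N - 1)" and "2 * N - 2 \<noteq> 0"
    by simp_all
  show ?thesis
  proof (cases "x = 0 \<or> x = 1")
    case True
    then show ?thesis
      using \<open>2 * N - 2 \<noteq> 0\<close> two by (auto simp: lifted_root_def power_0_left)
  next
    case False
    then have "x * (x + 1) \<noteq> 0"
      using add_eq_0_iff_CHAR_2[OF char, of x 1] by auto
    have frob: "(a + b) ^ 2 ^ k = a ^ 2 ^ k + b ^ 2 ^ k" for a b :: 'a and k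
      using char by (rule power_two_power_add_CHAR_2)
    have "(x + 1) ^ (2 * N - 2) + x ^ (2 * N - 2) = ((x + 1) ^ (N - 1) + x ^ (N - 1))\<^sup>2"
      using frob[of _ _ 1] by (simp add: exp power_even_eq)
    then have "(x + 1) ^ (2 * N - 2) + x ^ (2 * N - 2) = 0 \<longleftrightarrow>
        x * (x + 1) * ((x + 1) ^ (N - 1) + x ^ (N - 1)) = 0"
      using \<open>x * (x + 1) \<noteq> 0\<close> by simp
    also have "x * (x + 1) * ((x + 1) ^ (N - 1) + x ^ (N - 1)) = x * (x + 1) ^ N + (x + 1) * x ^ N"
      by (subst (3 4) N_pos) (simp add: algebra_simps)
    also have "\<dots> = x * (x ^ 2 ^ s + 1) * (x ^ 2 ^ (s + l) + 1) + (x + 1) * (x ^ 2 ^ s * x ^ 2 ^ (s + l))"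
      by (simp only: N power_add[of _ "2 ^ s"] frob power_one mult.assoc)
    also have "\<dots> = x * x ^ 2 ^ s + x * x ^ 2 ^ (s + l) + x + x ^ 2 ^ s * x ^ 2 ^ (s + l)"
      by (simp add: algebra_simps two flip: mult_2)
    finally show ?thesis
      using False by (simp add: lifted_root_def)
  qed
qed

lemma poly_pderiv_L1_eq_0_iff:
  assumes "m = 2 ^ Suc s * (2 ^ l + 1)"
  shows "poly (map_poly to_ac (pderiv (L1 m))) (x\<^sup>2 + x) = 0 \<longleftrightarrow> lifted_root s l (x :: bit alg_closure)"
proof -
  have "m - 2 = 2 * (2 ^ s + 2 ^ (s + l)) - 2"
    using assms by (simp add: algebra_simps power_add)
  then show ?thesis
    using poly_pderiv_L1_quadratic[OF _ assms] lifted_root_iff[of "2 ^ s + 2 ^ (s + l)" s l x]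
    by simp
qed

lemma lifted_root_of_fixed:
  fixes a :: "'a::field"
  assumes char: "CHAR('a) = 2" and "a ^ 2 ^ Suc s = a" and "a ^ 2 ^ l = a"
    and "a \<noteq> 0" and "a \<noteq> 1"
  shows "lifted_root s l a"
proof -
  have "a ^ 2 ^ (s + l) = a ^ 2 ^ s"
    using assms by (metis add.commute power_add power_mult)
  moreover have "a ^ 2 ^ s * a ^ 2 ^ s = a"
    using assms by (simp flip: power_add mult_2)
  ultimately show ?thesis
    using assms by (simp add: lifted_root_def add_self_CHAR_2)
qed

lemma lifted_root_fixed:
  fixes x :: "'a::field"
  assumes char: "CHAR('a) = 2" and root: "lifted_root s l x"
    and k_fixed: "(x ^ 2 ^ s + x ^ 2 ^ (s + l)) ^ 2 ^ l = x ^ 2 ^ s + x ^ 2 ^ (s + l)"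
  shows "x ^ 2 ^ l = x \<and> x ^ 2 ^ Suc s = x"
proof -
  define z u k where "z = x ^ 2 ^ s" and "u = x ^ 2 ^ (s + l)" and "k = z + u"
  have frob: "(a + b) ^ 2 ^ n = a ^ 2 ^ n + b ^ 2 ^ n" for a b :: 'a and n
    using char by (rule power_two_power_add_CHAR_2)
  have u_z: "u = z ^ 2 ^ l" and u_k: "u = z + k"
    using add_self_CHAR_2[OF char, of z] by (simp_all add: z_def u_def k_def power_add power_mult)
  have k_pow: "k ^ 2 ^ l = k"
    using k_fixed by (simp add: z_def u_def k_def)
  have u_pow: "u ^ 2 ^ l = z"
  proof -
    have "u ^ 2 ^ l = u + k"
      by (simp add: u_k frob k_pow flip: u_z)
    also have "\<dots> = z"
      using add_self_CHAR_2[OF char, of u] by (simp add: k_def add.left_commute)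
    finally show ?thesis .
  qed
  have "x * (k + 1) + z * u = 0"
    using root by (simp add: lifted_root_def z_def u_def k_def algebra_simps)
  then have x_k: "x * (k + 1) = z * u"
    using add_eq_0_iff_CHAR_2[OF char] by blast
  moreover have "z \<noteq> 0" and "u \<noteq> 0"
    using root by (simp_all add: lifted_root_def z_def u_def)
  ultimately have "k + 1 \<noteq> 0"
    by auto
  have x_fixed: "x ^ 2 ^ l = x"
  proof -
    have "x = z * u / (k + 1)"
      using x_k \<open>k + 1 \<noteq> 0\<close> by (simp add: field_simps)
    moreover have "(k + 1) ^ 2 ^ l = k + 1"
      using k_pow by (simp add: frob)
    ultimately show ?thesis
      using u_pow by (metis power_divide power_mult_distrib u_z mult.commute)
  qed
  then have "u = z"
    by (simp add: z_def u_def power_add power_mult mult.commute[of "2 ^ s"])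
  then have "x = z * z"
    using root add_self_CHAR_2[OF char] add_eq_0_iff_CHAR_2[OF char]
    by (simp add: lifted_root_def flip: z_def u_def)
  then show ?thesis
    using x_fixed by (simp add: z_def flip: power_add mult_2)
qed

lemma lifted_root_shift:
  fixes x w :: "'a::field"
  assumes char: "CHAR('a) = 2" and x: "lifted_root s l x" and xw: "lifted_root s l (x + w)"
    and w_fixed: "w ^ 2 ^ l = w"
  shows "(w + w ^ 2 ^ s) * (x ^ 2 ^ s + x ^ 2 ^ (s + l)) = w + (w ^ 2 ^ s)\<^sup>2"
proof -
  define z u c where "z = x ^ 2 ^ s" and "u = x ^ 2 ^ (s + l)" and "c = w ^ 2 ^ s"
  have "w ^ 2 ^ (s + l) = c"
    using w_fixed by (simp add: c_def power_add power_mult mult.commute[of "2 ^ s"])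
  then have "(x + w) * (z + c) + (x + w) * (u + c) + (x + w) + (z + c) * (u + c) = 0"
    using xw power_two_power_add_CHAR_2[OF char]
    by (simp add: lifted_root_def z_def u_def c_def)
  moreover have "x * z + x * u + x + z * u = 0"
    using x by (simp add: lifted_root_def z_def u_def)
  moreover have "((x + w) * (z + c) + (x + w) * (u + c) + (x + w) + (z + c) * (u + c))
      + (x * z + x * u + x + z * u)
      = ((w + c) * (z + u) + (w + c\<^sup>2)) + 2 * (x * z + x * u + x + z * u + x * c + w * c)"
    by (simp add: algebra_simps power2_eq_square)
  ultimately have "(w + c) * (z + u) + (w + c\<^sup>2) = 0"
    by (simp add: two_eq_0_CHAR_2[OF char])
  then show ?thesis
    using add_eq_0_iff_CHAR_2[OF char] by (simp add: z_def u_def c_def)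
qed

lemma lifted_root_pair_fixed:
  fixes x y :: "'a::field"
  assumes char: "CHAR('a) = 2" and x: "lifted_root s l x" and y: "lifted_root s l y"
    and w_fixed: "(x + y) ^ 2 ^ l = x + y" and w_nontriv: "(x + y)\<^sup>2 + (x + y) \<noteq> 0"
  shows "x ^ 2 ^ l = x \<and> x ^ 2 ^ Suc s = x \<and> (x + y) ^ 2 ^ Suc s = x + y"
proof -
  define w z u c where "w = x + y" and "z = x ^ 2 ^ s" and "u = x ^ 2 ^ (s + l)" and "c = w ^ 2 ^ s"
  have frob: "(a + b) ^ 2 ^ n = a ^ 2 ^ n + b ^ 2 ^ n" for a b :: 'a and n
    using char by (rule power_two_power_add_CHAR_2)
  have swap: "(a ^ 2 ^ i) ^ 2 ^ j = (a ^ 2 ^ j) ^ 2 ^ i" for a :: 'a and i j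
    by (metis power_mult mult.commute)
  have "y = x + w"
    using add_self_CHAR_2[OF char, of x] by (simp add: w_def flip: add.assoc)
  then have "lifted_root s l (x + w)"
    using y by simp
  moreover have "w ^ 2 ^ l = w"
    using w_fixed by (simp add: w_def)
  ultimately have wc: "(w + c) * (z + u) = w + c\<^sup>2"
    using lifted_root_shift[OF char x] by (simp add: z_def u_def c_def)
  from \<open>w ^ 2 ^ l = w\<close> have c_fixed: "c ^ 2 ^ l = c" and c2_fixed: "(c\<^sup>2) ^ 2 ^ l = c\<^sup>2"
    by (simp_all add: c_def swap[of _ 1, simplified] swap[of _ s])
  have "w + c \<noteq> 0"
  proof
    assume "w + c = 0"
    moreover from this have "w + c\<^sup>2 = 0"
      using wc by simp
    ultimately have "w\<^sup>2 + w = 0"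
      using add_eq_0_iff_CHAR_2[OF char, of w c] by (simp add: add.commute)
    then show False
      using w_nontriv by (simp add: w_def add.commute)
  qed
  then have "z + u = (w + c\<^sup>2) / (w + c)"
    using wc by (simp add: field_simps)
  then have "(z + u) ^ 2 ^ l = z + u"
    using \<open>w ^ 2 ^ l = w\<close> c_fixed c2_fixed by (simp add: power_divide frob)
  then have x_fixed: "x ^ 2 ^ l = x \<and> x ^ 2 ^ Suc s = x"
    using lifted_root_fixed[OF char x] by (simp add: z_def u_def)
  then have "u = z"
    unfolding z_def u_def by (metis power_add power_mult swap)
  then have "w = c\<^sup>2"
    using wc add_self_CHAR_2[OF char, of z] add_eq_0_iff_CHAR_2[OF char] by simp
  then show ?thesis
    using x_fixed by (simp add: c_def w_def mult.commute[of "2 ^ s" 2] flip: power_mult)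
qed

lemma lifted_root_pair_collide:
  fixes x y :: "'a::field"
  assumes char: "CHAR('a) = 2" and gcd: "gcd (Suc s) l \<le> 2"
    and x: "lifted_root s l x" and y: "lifted_root s l y" and w_fixed: "(x + y) ^ 2 ^ l = x + y"
  shows "(x + y)\<^sup>2 + (x + y) = 0"
proof (rule ccontr)
  assume "(x + y)\<^sup>2 + (x + y) \<noteq> 0"
  then have fixed: "x ^ 2 ^ l = x" "x ^ 2 ^ Suc s = x" "(x + y) ^ 2 ^ Suc s = x + y"
    using lifted_root_pair_fixed[OF char x y w_fixed] by simp_all
  have "gcd (Suc s) l = 1 \<or> gcd (Suc s) l = 2"
    using gcd gcd_pos_nat[of "Suc s" l] by linarith
  then have "gcd (Suc s) l dvd 2"
    by auto
  then obtain d where d: "2 = gcd (Suc s) l * d" ..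
  have F4: "a ^ 4 = a" if "a ^ 2 ^ Suc s = a" and "a ^ 2 ^ l = a" for a :: 'a
    using power_power_mult_eq_self[OF power_power_gcd_eq_self[OF that], of d] by (simp flip: d)
  have "x ^ 4 = x" and "(x + y) ^ 4 = x + y"
    using F4 fixed w_fixed by simp_all
  moreover have "y = (x + y) + x"
    using add_self_CHAR_2[OF char, of x] by (simp add: add_ac)
  ultimately have "y ^ 4 = y"
    using power_two_power_add_CHAR_2[OF char, of "x + y" x 2] by (simp only: power2_eq_square) simp
  then have "x\<^sup>2 + x + 1 = 0" and "y\<^sup>2 + y + 1 = 0"
    using quadratic_eq_0_if_power_4_eq_self[OF char] \<open>x ^ 4 = x\<close> x y by (simp_all add: lifted_root_def)
  moreover have "(x + y)\<^sup>2 + (x + y) = (x\<^sup>2 + x + 1) + (y\<^sup>2 + y + 1) + 2 * (x * y - 1)"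
    by (simp add: algebra_simps power2_eq_square)
  ultimately have "(x + y)\<^sup>2 + (x + y) = 0"
    by (simp add: two_eq_0_CHAR_2[OF char])
  with \<open>(x + y)\<^sup>2 + (x + y) \<noteq> 0\<close> show False ..
qed

lemma lifted_root_pair_of_fixed:
  fixes a :: "'a::field"
  assumes char: "CHAR('a) = 2" and r: "a ^ 2 ^ Suc s = a" and l: "a ^ 2 ^ l = a" and "a ^ 4 \<noteq> a"
  shows "lifted_root s l a" and "lifted_root s l (a\<^sup>2)"
    and "(a + a\<^sup>2) ^ 2 ^ l = a + a\<^sup>2" and "(a + a\<^sup>2)\<^sup>2 + (a + a\<^sup>2) \<noteq> 0"
proof -
  have frob: "(x + y) ^ 2 ^ n = x ^ 2 ^ n + y ^ 2 ^ n" for x y :: 'a and n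
    using char by (rule power_two_power_add_CHAR_2)
  have square_fixed: "(a\<^sup>2) ^ 2 ^ n = a\<^sup>2" if "a ^ 2 ^ n = a" for n
    using that by (metis power_mult mult.commute)
  have "a \<noteq> 0" and "a \<noteq> 1"
    using \<open>a ^ 4 \<noteq> a\<close> by auto
  moreover have "a\<^sup>2 \<noteq> 0" and "a\<^sup>2 \<noteq> 1"
    using calculation frob[of a 1 1] add_eq_0_iff_CHAR_2[OF char, of a 1]
      add_eq_0_iff_CHAR_2[OF char, of "a\<^sup>2" 1] by auto
  ultimately show "lifted_root s l a" and "lifted_root s l (a\<^sup>2)"
    using lifted_root_of_fixed[OF char r l] lifted_root_of_fixed[OF char square_fixed[OF r] square_fixed[OF l]]
    by simp_all
  show "(a + a\<^sup>2) ^ 2 ^ l = a + a\<^sup>2"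
    using l square_fixed by (simp add: frob)
  have "(a + a\<^sup>2)\<^sup>2 + (a + a\<^sup>2) = a ^ 4 + a + 2 * (a ^ 3 + a\<^sup>2)"
    by (simp add: algebra_simps power2_eq_square power3_eq_cube power4_eq_xxxx)
  also have "\<dots> = a ^ 4 + a"
    by (simp add: two_eq_0_CHAR_2[OF char])
  finally show "(a + a\<^sup>2)\<^sup>2 + (a + a\<^sup>2) \<noteq> 0"
    using \<open>a ^ 4 \<noteq> a\<close> add_eq_0_iff_CHAR_2[OF char] by metis
qed

lemma trace_poly_nonzero_at_sum_of_roots:
  fixes ti tj :: "bit alg_closure"
  assumes m: "m = 2 ^ Suc s * (2 ^ l + 1)" and "gcd (Suc s) l \<le> 2"
    and "poly (map_poly to_ac (pderiv (L1 m))) ti = 0" and "poly (map_poly to_ac (pderiv (L1 m))) tj = 0"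
    and "ti \<noteq> tj"
  shows "poly (map_poly to_ac (trace_poly l)) (ti + tj) \<noteq> 0"
proof
  assume trace: "poly (map_poly to_ac (trace_poly l)) (ti + tj) = 0"
  obtain x y where "ti = x\<^sup>2 + x" and "tj = y\<^sup>2 + y"
    using surjD[OF surj_square_add_self] by meson
  with assms(3,4) have "lifted_root s l x" and "lifted_root s l y"
    by (simp_all add: poly_pderiv_L1_eq_0_iff[OF m])
  moreover have "(x + y) ^ 2 ^ l = x + y"
    using trace \<open>ti = x\<^sup>2 + x\<close> \<open>tj = y\<^sup>2 + y\<close>
    by (simp add: poly_trace_poly_add_quadratics add_eq_0_iff_CHAR_2)
  moreover have "(x + y)\<^sup>2 + (x + y) \<noteq> 0"
    using \<open>ti \<noteq> tj\<close> \<open>ti = x\<^sup>2 + x\<close> \<open>tj = y\<^sup>2 + y\<close> by (simp add: square_add_self_eq_iff_CHAR_2)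
  moreover have "CHAR(bit alg_closure) = 2"
    by simp
  ultimately show False
    using lifted_root_pair_collide[OF _ \<open>gcd (Suc s) l \<le> 2\<close>] by blast
qed

lemma roots_with_trace_poly_zero_at_sum:
  assumes m: "m = 2 ^ Suc s * (2 ^ l + 1)" and "gcd (Suc s) l \<ge> 3"
  obtains ti tj :: "bit alg_closure"
  where "poly (map_poly to_ac (pderiv (L1 m))) ti = 0" and "poly (map_poly to_ac (pderiv (L1 m))) tj = 0"
    and "ti \<noteq> tj" and "poly (map_poly to_ac (trace_poly l)) (ti + tj) = 0"
proof -
  have char: "CHAR(bit alg_closure) = 2"
    by simp
  obtain a :: "bit alg_closure" where a: "a ^ 2 ^ gcd (Suc s) l = a" and "a ^ 4 \<noteq> a"
    by (rule exists_fixed_outside_F4[OF char assms(2)])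
  have fixed: "a ^ 2 ^ n = a" if "gcd (Suc s) l dvd n" for n
    using that power_power_mult_eq_self[OF a] by (auto elim: dvdE)
  note pair = lifted_root_pair_of_fixed[OF char fixed[OF gcd_dvd1] fixed[OF gcd_dvd2] \<open>a ^ 4 \<noteq> a\<close>]
  show thesis
  proof (rule that)
    show "poly (map_poly to_ac (pderiv (L1 m))) (a\<^sup>2 + a) = 0"
      and "poly (map_poly to_ac (pderiv (L1 m))) ((a\<^sup>2)\<^sup>2 + a\<^sup>2) = 0"
      using pair(1,2) by (simp_all only: poly_pderiv_L1_eq_0_iff[OF m])
    show "a\<^sup>2 + a \<noteq> (a\<^sup>2)\<^sup>2 + a\<^sup>2"
      using pair(4) square_add_self_eq_iff_CHAR_2[OF char, of a "a\<^sup>2"] by blast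
    show "poly (map_poly to_ac (trace_poly l)) ((a\<^sup>2 + a) + ((a\<^sup>2)\<^sup>2 + a\<^sup>2)) = 0"
      using pair(3) add_self_CHAR_2[OF char] by (simp only: poly_trace_poly_add_quadratics)
  qed
qed

theorem proposition3p4:
  fixes r l m :: nat
  assumes "r \<ge> 2" and "l \<ge> 1" and "m = 2 ^ r * (2 ^ l + 1)"
  shows "gcd r l \<le> 2 \<longleftrightarrow>
    (\<forall>ti tj :: bit alg_closure.
       poly (map_poly to_ac (pderiv (L1 m))) ti = 0 \<longrightarrow>
       poly (map_poly to_ac (pderiv (L1 m))) tj = 0 \<longrightarrow>
       ti \<noteq> tj \<longrightarrow>
       poly (map_poly to_ac (trace_poly l)) (ti + tj) \<noteq> 0)"
proof -
  obtain s where r: "r = Suc s"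
    using assms(1) by (cases r) auto
  then have m: "m = 2 ^ Suc s * (2 ^ l + 1)"
    using assms(3) by simp
  have "gcd (Suc s) l \<le> 2 \<or> gcd (Suc s) l \<ge> 3"
    by linarith
  then show ?thesis
    unfolding r using trace_poly_nonzero_at_sum_of_roots[OF m] roots_with_trace_poly_zero_at_sum[OF m]
    by (metis not_less_eq_eq numeral_3_eq_3 numeral_2_eq_2)
qed

end
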